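(* Let $n\ge2$, $l\ge1$, $\mathfrak g=A^{(2)}_{2n}$, $B$ the level-$l$ perfect crystal of the context, $\lambda=l\Lambda_0$, $d=2n$, and $i^{(j)}_a=a-1$ for $1\le a\le n+1$, $i^{(j)}_a=2n+1-a$ for $n+2\le a\le 2n$ (all $j\ge1$). Then: (II) $B^{(j)}_d=B$ for all $j\ge1$; (III) $\langle\lambda_j,h_{i^{(j)}_a}\rangle\le\varepsilon_{i^{(j)}_a}(b)$ for all $j\ge1$, $1\le a\le d$, $b\in B^{(j)}_{a-1}$; (IV') for all $j\ge1$, $a=1,\dots,d$: $\varepsilon_{i^{(j)}_{a+1}}(b^{(j)}_a)=0$, $\varphi_{i^{(j)}_{a+1}}(b^{(j)}_a)>0$ (with $i^{(j)}_{d+1}:=i^{(j+1)}_1$), and $b^{(j+1)}_0=\tilde f_{i^{(j+1)}_1}^mb^{(j)}_d$ with $m=\langle\lambda_{j+1},h_{i^{(j+1)}_1}\rangle$. Moreover $B^{(j)}_0=\{(0,\dots,0)\}$, $B^{(j)}_{2n}=B$; for $1\le a\le n$, $B^{(j)}_a$ is the set of $b\in B$ with all coordinates $0$ except possibly $x_1,\dots,x_a$; for $1\le a\le n-1$, $B^{(j)}_{n+a}$ is the set of $b\in B$ with all coordinates $0$ except possibly $x_1,\dots,x_n,\bar x_n,\dots,\bar x_{n-a+1}$. Also $b^{(j)}_0=(0,\dots,0)$, and for $1\le a\le n$, $b^{(j)}_a$ has $x_a=l$ and $b^{(j)}_{n+a}$ has $\bar x_{n-a+1}=l$, all other coordinates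 $0$.
   Context: $(x)_+=\max(x,0)$. $B=\{(x_1,\dots,x_n,\bar x_n,\dots,\bar x_1)\in\mathbb Z^{2n}: x_i,\bar x_i\ge0,\ \sum_{i=1}^n(x_i+\bar x_i)\le l\}$. Crystal structure: $\tilde f_0b=(x_1+1,x_2,\dots,\bar x_1)$ if $x_1\ge\bar x_1$, $(x_1,\dots,\bar x_2,\bar x_1-1)$ if $x_1<\bar x_1$; for $1\le i\le n-1$, $\tilde f_ib$ replaces $(x_i,x_{i+1})$ by $(x_i-1,x_{i+1}+1)$ if $x_{i+1}\ge\bar x_{i+1}$, and $(\bar x_{i+1},\bar x_i)$ by $(\bar x_{i+1}-1,\bar x_i+1)$ if $x_{i+1}<\bar x_{i+1}$; $\tilde f_nb$ replaces $(x_n,\bar x_n)$ by $(x_n-1,\bar x_n+1)$; $\tilde e_ib=b'$ iff $\tilde f_ib'=b$; results outside $B$ mean $0$. With $s(b)=\sum_{i=1}^n(x_i+\bar x_i)$: $\varphi_0(b)=l-s(b)+2(\bar x_1-x_1)_+$, $\varepsilon_0(b)=l-s(b)+2(x_1-\bar x_1)_+$; $\varphi_i(b)=x_i+(\bar x_{i+1}-x_{i+1})_+$, $\varepsilon_i(b)=\bar x_i+(x_{i+1}-\bar x_{i+1})_+$ ($1\le i\le n-1$); $\varphi_n(b)=x_n$, $\varepsilon_n(b)=\bar x_n$. For $\lambda=l\Lambda_0$: $\lambda_j=l\Lambda_0$ and $\overline b_j=(0,\dots,0)$ for all $j$; $\langle\lambda_j,h_i\rangle$ is the coefficient of $\Lambda_i$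 in $\lambda_j$. Given $d$, $i^{(j)}_a$: $B^{(j)}_0=\{\overline b_j\}$, $B^{(j)}_a=\bigcup_{n\ge0}\tilde f_{i^{(j)}_a}^nB^{(j)}_{a-1}\setminus\{0\}$; $b^{(j)}_0=\overline b_j$, $b^{(j)}_a=\tilde f_{i^{(j)}_a}^{\varphi_{i^{(j)}_a}(b^{(j)}_{a-1})}b^{(j)}_{a-1}$. *)

theory Defs
  imports Main
begin

text \<open>Crystal elements b = (x_1,...,x_n, xbar_n,...,xbar_1) are represented as
  int lists of length 2n: x_i is at position i-1 and xbar_i at position 2n-i.
  The value 0 (outside B) is modelled by None.\<close>

definition xc :: "int list \<Rightarrow> nat \<Rightarrow> int" where
  "xc b i = b ! (i - 1)"

definition xbar :: "nat \<Rightarrow> int list \<Rightarrow> nat \<Rightarrow> int" where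
  "xbar n b i = b ! (2 * n - i)"

definition mkb :: "nat \<Rightarrow> (nat \<Rightarrow> int) \<Rightarrow> (nat \<Rightarrow> int) \<Rightarrow> int list" where
  "mkb n x xb = map x [1..<n+1] @ map xb (rev [1..<n+1])"

definition crysB :: "nat \<Rightarrow> nat \<Rightarrow> int list set" where
  "crysB n l = {b. length b = 2 * n \<and> (\<forall>k < 2 * n. 0 \<le> b ! k) \<and> sum_list b \<le> int l}"

definition pos :: "int \<Rightarrow> int" where
  "pos x = max x 0"

definition sB :: "int list \<Rightarrow> int" where
  "sB b = sum_list b"

definition fraw :: "nat \<Rightarrow> nat \<Rightarrow> int list \<Rightarrow> int list" where
  "fraw n i b =
    (if i = 0 then
       (if xc b 1 \<ge> xbar n b 1 then b[0 := xc b 1 + 1]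
        else b[2 * n - 1 := xbar n b 1 - 1])
     else if i < n then
       (if xc b (i + 1) \<ge> xbar n b (i + 1)
        then b[i - 1 := xc b i - 1, i := xc b (i + 1) + 1]
        else b[2 * n - (i + 1) := xbar n b (i + 1) - 1, 2 * n - i := xbar n b i + 1])
     else if i = n then b[n - 1 := xc b n - 1, n := xbar n b n + 1]
     else b)"

definition ftil :: "nat \<Rightarrow> nat \<Rightarrow> nat \<Rightarrow> int list \<Rightarrow> int list option" where
  "ftil n l i b = (if b \<in> crysB n l \<and> i \<le> n \<and> fraw n i b \<in> crysB n l
                   then Some (fraw n i b) else None)"

primrec fpow :: "nat \<Rightarrow> nat \<Rightarrow> nat \<Rightarrow> nat \<Rightarrow> int list \<Rightarrow> int list option" where
  "fpow n l i 0 b = Some b"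
| "fpow n l i (Suc k) b = Option.bind (fpow n l i k b) (ftil n l i)"

definition phi :: "nat \<Rightarrow> nat \<Rightarrow> nat \<Rightarrow> int list \<Rightarrow> int" where
  "phi n l i b =
    (if i = 0 then int l - sB b + 2 * pos (xbar n b 1 - xc b 1)
     else if i < n then xc b i + pos (xbar n b (i + 1) - xc b (i + 1))
     else if i = n then xc b n
     else 0)"

definition eps :: "nat \<Rightarrow> nat \<Rightarrow> nat \<Rightarrow> int list \<Rightarrow> int" where
  "eps n l i b =
    (if i = 0 then int l - sB b + 2 * pos (xc b 1 - xbar n b 1)
     else if i < n then xbar n b i + pos (xc b (i + 1) - xbar n b (i + 1))
     else if i = n then xbar n b n
     else 0)"

text \<open>lambda_j = l Lambda_0 for all j; pairing with h_i = coefficient of Lambda_i.\<close>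
definition lamh :: "nat \<Rightarrow> nat \<Rightarrow> nat \<Rightarrow> nat" where
  "lamh l j i = (if i = 0 then l else 0)"

definition iseq :: "nat \<Rightarrow> nat \<Rightarrow> nat \<Rightarrow> nat" where
  "iseq n j a = (if a \<le> n + 1 then a - 1 else 2 * n + 1 - a)"

definition inext :: "nat \<Rightarrow> nat \<Rightarrow> nat \<Rightarrow> nat" where
  "inext n j a = (if a = 2 * n then iseq n (j + 1) 1 else iseq n j (a + 1))"

definition bbar :: "nat \<Rightarrow> int list" where
  "bbar n = mkb n (\<lambda>_. 0) (\<lambda>_. 0)"

fun Bset :: "nat \<Rightarrow> nat \<Rightarrow> nat \<Rightarrow> nat \<Rightarrow> int list set" where
  "Bset n l j 0 = {bbar n}"
| "Bset n l j (Suc a) =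
     {b'. \<exists>b \<in> Bset n l j a. \<exists>k. fpow n l (iseq n j (Suc a)) k b = Some b'}"

fun bseq :: "nat \<Rightarrow> nat \<Rightarrow> nat \<Rightarrow> nat \<Rightarrow> int list option" where
  "bseq n l j 0 = Some (bbar n)"
| "bseq n l j (Suc a) = Option.bind (bseq n l j a)
     (\<lambda>b. fpow n l (iseq n j (Suc a)) (nat (phi n l (iseq n j (Suc a)) b)) b)"

end

theory Submission
  imports Defs
begin

text \<open>Read an element of B as the list x_1, ..., x_n, xbar_n, ..., xbar_1 of its coordinates,
  at positions 0, ..., 2n - 1.  On elements supported on positions 0, ..., a, the operator
  f_{i_{a+1}} adds a unit at position 0 if a = 0, and otherwise moves a unit from position a - 1
  to position a; the only exception is a > n with x_{2n-a+1} >= xbar_{2n-a+1}, where it moves a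
  unit from x_{2n-a} to x_{2n-a+1}, still inside the support.  Hence, by induction on a, B_{a+1}
  consists of the elements of B supported on positions 0, ..., a: such an element with a nonzero
  entry at position a is the image under f_{i_{a+1}} of one of smaller weight, and otherwise it
  already lies in B_a.  Along the maximal strings all l units travel together, so b_a carries
  them at position a - 1, where eps_{i_{a+1}} vanishes and phi_{i_{a+1}} is positive.\<close>

lemma sum_list_update_group:
  "k < length xs \<Longrightarrow> sum_list (xs[k := v]) = sum_list xs - xs ! k + (v :: 'a :: ab_group_add)"
  by (induction xs arbitrary: k) (auto split: nat.splits)

lemma crysB_move_unit:
  assumes "b \<in> crysB n l" "p < 2 * n" "q < 2 * n" "p \<noteq> q" "b ! p \<ge> 1"
  shows "b[p := b ! p - 1, q := b ! q + 1] \<in> crysB n l"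
  using assms by (auto simp: crysB_def sum_list_update_group nth_list_update)

lemma crysB_decrement:
  assumes "b \<in> crysB n l" "p < 2 * n" "b ! p \<ge> 1"
  shows "b[p := b ! p - 1] \<in> crysB n l"
  using assms by (auto simp: crysB_def sum_list_update_group nth_list_update)

lemma replicate_update_in_crysB:
  "p < 2 * n \<Longrightarrow> 0 \<le> u \<Longrightarrow> u \<le> int l \<Longrightarrow> (replicate (2 * n) 0)[p := u] \<in> crysB n l"
  by (simp add: crysB_def sum_list_update_group sum_list_replicate nth_list_update)

lemma replicate_update2_in_crysB:
  "p < 2 * n \<Longrightarrow> q < 2 * n \<Longrightarrow> p \<noteq> q \<Longrightarrow>
   0 \<le> u \<Longrightarrow> 0 \<le> v \<Longrightarrow> u + v \<le> int l \<Longrightarrow> (replicate (2 * n) 0)[p := u, q := v] \<in> crysB n l"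
  by (simp add: crysB_def sum_list_update_group sum_list_replicate nth_list_update)

lemma fpow_preserves:
  assumes "\<And>b b'. b \<in> X \<Longrightarrow> ftil n l i b = Some b' \<Longrightarrow> b' \<in> X"
  shows "b \<in> X \<Longrightarrow> fpow n l i k b = Some b' \<Longrightarrow> b' \<in> X"
proof (induction k arbitrary: b')
  case (Suc k)
  then obtain c where "fpow n l i k b = Some c" "ftil n l i c = Some b'"
    by (cases "fpow n l i k b") auto
  with Suc assms show ?case by blast
qed simp

lemma fpow_chain:
  "(\<And>t. t < k \<Longrightarrow> ftil n l i (c t) = Some (c (Suc t))) \<Longrightarrow> fpow n l i k (c 0) = Some (c k)"
  by (induction k) auto

lemma Bset_Suc_eqI:
  fixes w :: "int list \<Rightarrow> nat"
  assumes prev: "Bset n l j a = S" and "S \<subseteq> T"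
    and closed: "\<And>b b'. b \<in> T \<Longrightarrow> ftil n l (iseq n j (Suc a)) b = Some b' \<Longrightarrow> b' \<in> T"
    and descent: "\<And>b. b \<in> T \<Longrightarrow> b \<notin> S \<Longrightarrow>
                    \<exists>c \<in> T. ftil n l (iseq n j (Suc a)) c = Some b \<and> w c < w b"
  shows "Bset n l j (Suc a) = T"
proof
  show "Bset n l j (Suc a) \<subseteq> T"
    using prev \<open>S \<subseteq> T\<close> fpow_preserves[of T n l "iseq n j (Suc a)"] closed by auto
  show "T \<subseteq> Bset n l j (Suc a)"
  proof
    fix b assume "b \<in> T"
    then show "b \<in> Bset n l j (Suc a)"
    proof (induction "w b" arbitrary: b rule: less_induct)
      case less
      show ?case
      proof (cases "b \<in> S")
        case True
        have "fpow n l (iseq n j (Suc a)) 0 b = Some b" by simp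
        then show ?thesis using True prev by (simp only: Bset.simps) blast
      next
        case False
        then obtain c where c: "c \<in> T" "ftil n l (iseq n j (Suc a)) c = Some b" "w c < w b"
          using descent less.prems by blast
        then obtain b0 k where "b0 \<in> Bset n l j a" "fpow n l (iseq n j (Suc a)) k b0 = Some c"
          using less.hyps[OF c(3) c(1)] by auto
        then have "fpow n l (iseq n j (Suc a)) (Suc k) b0 = Some b" using c(2) by simp
        then show ?thesis using \<open>b0 \<in> Bset n l j a\<close> by (simp only: Bset.simps) blast
      qed
    qed
  qed
qed

lemma iseq_Suc: "iseq n j (Suc a) = (if a \<le> n then a else 2 * n - a)"
  by (simp add: iseq_def)

lemma iseq_Suc_le: "a < 2 * n \<Longrightarrow> iseq n j (Suc a) \<le> n"
  unfolding iseq_Suc by (cases "a \<le> n") auto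

lemma inext_eq_iseq_Suc: "a \<le> 2 * n \<Longrightarrow> inext n j a = iseq n j (Suc a)"
  by (simp add: inext_def iseq_def)

lemma bbar_eq_replicate: "bbar n = replicate (2 * n) 0"
  by (simp add: bbar_def mkb_def map_replicate_const mult_2 replicate_add del: upt_Suc)

definition shift_unit :: "int list \<Rightarrow> nat \<Rightarrow> int list" where
  "shift_unit b p = b[p - 1 := b ! (p - 1) - 1, p := b ! p + 1]"

lemma shift_unit_inverse:
  "0 < p \<Longrightarrow> p < length b \<Longrightarrow> shift_unit (b[p := b ! p - 1, p - 1 := b ! (p - 1) + 1]) p = b"
  by (intro nth_equalityI) (auto simp: shift_unit_def nth_list_update)

lemma nth_shift_unit_above: "q < p \<Longrightarrow> shift_unit b q ! p = b ! p"
  by (simp add: shift_unit_def)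

definition crysB_prefix :: "nat \<Rightarrow> nat \<Rightarrow> nat \<Rightarrow> int list set" where
  "crysB_prefix n l a = {b \<in> crysB n l. \<forall>p < 2 * n. a \<le> p \<longrightarrow> b ! p = 0}"

lemma crysB_prefix_0: "crysB_prefix n l 0 = {replicate (2 * n) 0}"
  by (auto simp: crysB_prefix_def crysB_def sum_list_replicate intro!: nth_equalityI)

lemma crysB_prefix_mono: "crysB_prefix n l a \<subseteq> crysB_prefix n l (Suc a)"
  by (auto simp: crysB_prefix_def)

lemma fraw_0_prefix:
  assumes "0 < n" "b \<in> crysB_prefix n l 1"
  shows "fraw n 0 b = b[0 := b ! 0 + 1]"
proof -
  have "b ! (2 * n - 1) = 0" "0 \<le> b ! 0" using assms by (auto simp: crysB_prefix_def crysB_def)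
  then show ?thesis by (simp add: fraw_def xc_def xbar_def)
qed

lemma fraw_iseq_Suc_prefix:
  assumes a: "1 \<le> a" "a < 2 * n" and b: "b \<in> crysB_prefix n l (Suc a)"
  shows "fraw n (iseq n j (Suc a)) b =
    (if n < a \<and> b ! (a - 1) \<le> b ! (2 * n - a) then shift_unit b (2 * n - a) else shift_unit b a)"
proof -
  consider "a < n" | "a = n" | "n < a" by linarith
  then show ?thesis
  proof cases
    case 1
    have "b ! (2 * n - Suc a) = 0" "0 \<le> b ! a" using b 1 by (auto simp: crysB_prefix_def crysB_def)
    then show ?thesis using a 1 by (simp add: fraw_def iseq_Suc xc_def xbar_def shift_unit_def)
  next
    case 2
    then show ?thesis using a by (simp add: fraw_def iseq_Suc xc_def xbar_def shift_unit_def)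
  next
    case 3
    then have "2 * n - Suc (2 * n - a) = a - 1" "2 * n - (2 * n - a) = a" "2 * n - a < n"
      using a by auto
    then show ?thesis using a 3 by (simp add: fraw_def iseq_Suc xc_def xbar_def shift_unit_def)
  qed
qed

lemma ftil_iseq_Suc_prefix_closed:
  assumes a: "a < 2 * n" and b: "b \<in> crysB_prefix n l (Suc a)"
    and f: "ftil n l (iseq n j (Suc a)) b = Some b'"
  shows "b' \<in> crysB_prefix n l (Suc a)"
proof -
  have b': "b' = fraw n (iseq n j (Suc a)) b" "b' \<in> crysB n l"
    using f by (auto simp: ftil_def split: if_splits)
  have "b' ! p = b ! p" if p: "Suc a \<le> p" for p
  proof (cases "a = 0")
    case True
    then show ?thesis using b' fraw_0_prefix[of n b l] a b p by (simp add: iseq_def)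
  next
    case False
    have "n < a \<Longrightarrow> 2 * n - a < p" "a < p" using p by arith+
    then show ?thesis
      using b' fraw_iseq_Suc_prefix[OF _ a b, of j] False by (simp add: nth_shift_unit_above)
  qed
  then show ?thesis using b b' by (simp add: crysB_prefix_def)
qed

lemma unshift_unit_in_crysB_prefix:
  assumes "a < 2 * n" "b \<in> crysB_prefix n l (Suc a)" "0 < p" "p \<le> a" "b ! p \<ge> 1"
  shows "b[p := b ! p - 1, p - 1 := b ! (p - 1) + 1] \<in> crysB_prefix n l (Suc a)"
proof -
  have "b[p := b ! p - 1, p - 1 := b ! (p - 1) + 1] \<in> crysB n l"
    using assms crysB_move_unit[of b n l p "p - 1"] by (simp add: crysB_prefix_def)
  then show ?thesis using assms by (auto simp: crysB_prefix_def nth_list_update)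
qed

text \<open>For a > n a preimage may have to undo an inner move into position 2n - a, which lowers
  that entry instead of the one at position a.\<close>
definition stage_weight :: "nat \<Rightarrow> nat \<Rightarrow> int list \<Rightarrow> nat" where
  "stage_weight n a b = nat (b ! a + (if n < a then b ! (2 * n - a) else 0))"

lemma fraw_0_preimage:
  assumes n: "0 < n" and b: "b \<in> crysB_prefix n l 1" and pos: "b ! 0 > 0"
  shows "\<exists>c \<in> crysB_prefix n l 1. fraw n 0 c = b \<and> stage_weight n 0 c < stage_weight n 0 b"
proof -
  define c where "c = b[0 := b ! 0 - 1]"
  have len: "length b = 2 * n" using b by (simp add: crysB_prefix_def crysB_def)
  have "c \<in> crysB n l" unfolding c_def using crysB_decrement[of b n l 0] b pos n
    by (simp add: crysB_prefix_def)
  then have cP: "c \<in> crysB_prefix n l 1"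
    using b by (auto simp: crysB_prefix_def c_def nth_list_update)
  have "fraw n 0 c = b" using fraw_0_prefix[OF n cP] n len by (simp add: c_def)
  moreover have "stage_weight n 0 c < stage_weight n 0 b"
    using pos n len by (simp add: stage_weight_def c_def)
  ultimately show ?thesis using cP by blast
qed

lemma fraw_iseq_Suc_preimage_outer:
  assumes a: "1 \<le> a" "a < 2 * n" and b: "b \<in> crysB_prefix n l (Suc a)" and pos: "b ! a > 0"
    and outer: "n < a \<longrightarrow> b ! (2 * n - a) \<le> b ! (a - 1)"
  shows "\<exists>c \<in> crysB_prefix n l (Suc a).
           fraw n (iseq n j (Suc a)) c = b \<and> stage_weight n a c < stage_weight n a b"
proof -
  have len: "length b = 2 * n" and nonneg: "\<And>p. p < 2 * n \<Longrightarrow> 0 \<le> b ! p"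
    using b by (auto simp: crysB_prefix_def crysB_def)
  define c where "c = b[a := b ! a - 1, a - 1 := b ! (a - 1) + 1]"
  have cP: "c \<in> crysB_prefix n l (Suc a)"
    unfolding c_def using unshift_unit_in_crysB_prefix[OF a(2) b] a pos by simp
  have far: "2 * n - a \<noteq> a - 1 \<and> 2 * n - a \<noteq> a" if "n < a" using that a by arith
  then have cond: "\<not> (n < a \<and> c ! (a - 1) \<le> c ! (2 * n - a))"
    using outer a len by (auto simp: c_def nth_list_update)
  have "fraw n (iseq n j (Suc a)) c = shift_unit c a"
    using fraw_iseq_Suc_prefix[OF a cP, of j] by (simp only: cond if_False)
  also have "\<dots> = b" unfolding c_def using shift_unit_inverse[of a b] a len by simp
  finally have "fraw n (iseq n j (Suc a)) c = b" .
  moreover have "stage_weight n a c < stage_weight n a b"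
    using far pos a len nonneg[of "2 * n - a"] by (auto simp: stage_weight_def c_def nth_list_update)
  ultimately show ?thesis using cP by blast
qed

lemma fraw_iseq_Suc_preimage_inner:
  assumes a: "n < a" "a < 2 * n" and b: "b \<in> crysB_prefix n l (Suc a)" and pos: "b ! a > 0"
    and inner: "b ! (a - 1) < b ! (2 * n - a)"
  shows "\<exists>c \<in> crysB_prefix n l (Suc a).
           fraw n (iseq n j (Suc a)) c = b \<and> stage_weight n a c < stage_weight n a b"
proof -
  have len: "length b = 2 * n" and "0 \<le> b ! (a - 1)"
    using b a by (auto simp: crysB_prefix_def crysB_def)
  define i where "i = 2 * n - a"
  have i: "0 < i" "i < a - 1" "2 * n - a = i" "b ! i \<ge> 1"
    using inner a \<open>0 \<le> b ! (a - 1)\<close> by (auto simp: i_def)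
  define c where "c = b[i := b ! i - 1, i - 1 := b ! (i - 1) + 1]"
  have cP: "c \<in> crysB_prefix n l (Suc a)"
    unfolding c_def using unshift_unit_in_crysB_prefix[OF a(2) b] i by simp
  have c: "c ! (a - 1) = b ! (a - 1)" "c ! i = b ! i - 1" "c ! a = b ! a"
    using i a len by (auto simp: c_def nth_list_update)
  then have "n < a \<and> c ! (a - 1) \<le> c ! (2 * n - a)" using inner a i by simp
  then have "fraw n (iseq n j (Suc a)) c = shift_unit c i"
    using fraw_iseq_Suc_prefix[OF _ a(2) cP, of j] a i by simp
  also have "\<dots> = b" unfolding c_def using shift_unit_inverse[of i b] i a len by simp
  finally have "fraw n (iseq n j (Suc a)) c = b" .
  moreover have "stage_weight n a c < stage_weight n a b"
    using c a i pos by (simp add: stage_weight_def)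
  ultimately show ?thesis using cP by blast
qed

lemma crysB_prefix_preimage:
  assumes a: "a < 2 * n" and b: "b \<in> crysB_prefix n l (Suc a)" and pos: "b ! a > 0"
  shows "\<exists>c \<in> crysB_prefix n l (Suc a).
           ftil n l (iseq n j (Suc a)) c = Some b \<and> stage_weight n a c < stage_weight n a b"
proof -
  have "\<exists>c \<in> crysB_prefix n l (Suc a).
          fraw n (iseq n j (Suc a)) c = b \<and> stage_weight n a c < stage_weight n a b"
  proof (cases "a = 0")
    case True
    then show ?thesis using fraw_0_preimage[of n b l] a b pos by (simp add: iseq_def)
  next
    case False
    then show ?thesis
      using fraw_iseq_Suc_preimage_outer[OF _ a b pos] fraw_iseq_Suc_preimage_inner[OF _ a b pos]
      by (cases "n < a \<and> b ! (a - 1) < b ! (2 * n - a)") auto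
  qed
  then show ?thesis using b iseq_Suc_le[OF a] by (auto simp: ftil_def crysB_prefix_def)
qed

lemma Bset_eq_crysB_prefix: "a \<le> 2 * n \<Longrightarrow> Bset n l j a = crysB_prefix n l a"
proof (induction a)
  case 0
  show ?case by (simp add: bbar_eq_replicate crysB_prefix_0)
next
  case (Suc a)
  show ?case
  proof (rule Bset_Suc_eqI[where w = "stage_weight n a"])
    show "Bset n l j a = crysB_prefix n l a" using Suc by simp
  next
    fix b assume b: "b \<in> crysB_prefix n l (Suc a)" "b \<notin> crysB_prefix n l a"
    have "0 \<le> b ! a" using b Suc.prems by (simp add: crysB_prefix_def crysB_def)
    moreover have "b ! a \<noteq> 0"
      using b by (auto simp: crysB_prefix_def) (metis Suc_leI le_neq_implies_less)
    ultimately have "b ! a > 0" by simp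
    then show "\<exists>c \<in> crysB_prefix n l (Suc a).
      ftil n l (iseq n j (Suc a)) c = Some b \<and> stage_weight n a c < stage_weight n a b"
      using crysB_prefix_preimage[of a n b l j] Suc.prems b by simp
  qed (use crysB_prefix_mono ftil_iseq_Suc_prefix_closed Suc.prems in auto)
qed

lemma fpow_iseq_Suc_shift_peak:
  assumes a: "1 \<le> a" "a < 2 * n"
  shows "fpow n l (iseq n j (Suc a)) l ((replicate (2 * n) 0)[a - 1 := int l])
       = Some ((replicate (2 * n) 0)[a := int l])"
proof -
  define c where "c t = (replicate (2 * n) 0)[a - 1 := int l - int t, a := int t]" for t
  have "ftil n l (iseq n j (Suc a)) (c t) = Some (c (Suc t))" if t: "t < l" for t
  proof -
    have c_in: "c t \<in> crysB n l" "c (Suc t) \<in> crysB n l"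
      unfolding c_def using a t by (auto intro!: replicate_update2_in_crysB)
    then have cP: "c t \<in> crysB_prefix n l (Suc a)" by (auto simp: crysB_prefix_def c_def)
    have "2 * n - a \<noteq> a - 1 \<and> 2 * n - a \<noteq> a" if "n < a" using that a by arith
    then have cond: "\<not> (n < a \<and> c t ! (a - 1) \<le> c t ! (2 * n - a))"
      using a t by (auto simp: c_def nth_list_update)
    have "fraw n (iseq n j (Suc a)) (c t) = shift_unit (c t) a"
      using fraw_iseq_Suc_prefix[OF a cP, of j] by (simp only: cond if_False)
    also have "\<dots> = c (Suc t)"
      using a by (intro nth_equalityI) (auto simp: shift_unit_def c_def nth_list_update)
    finally show ?thesis using c_in iseq_Suc_le[OF a(2)] by (simp add: ftil_def)
  qed
  then have "fpow n l (iseq n j (Suc a)) l (c 0) = Some (c l)" by (rule fpow_chain)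
  moreover have "c 0 = (replicate (2 * n) 0)[a - 1 := int l]" "c l = (replicate (2 * n) 0)[a := int l]"
    unfolding c_def using a by (auto intro!: nth_equalityI simp: nth_list_update)
  ultimately show ?thesis by simp
qed

lemma fpow_0_fill:
  assumes "0 < n"
  shows "fpow n l 0 l (replicate (2 * n) 0) = Some ((replicate (2 * n) 0)[0 := int l])"
proof -
  define c where "c t = (replicate (2 * n) 0)[0 := int t]" for t
  have "ftil n l 0 (c t) = Some (c (Suc t))" if t: "t < l" for t
  proof -
    have c_in: "c t \<in> crysB n l" "c (Suc t) \<in> crysB n l"
      unfolding c_def using assms t by (auto intro!: replicate_update_in_crysB)
    then have "c t \<in> crysB_prefix n l 1" by (auto simp: crysB_prefix_def c_def)
    then have "fraw n 0 (c t) = c (Suc t)" using fraw_0_prefix assms by (simp add: c_def add.commute)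
    then show ?thesis using c_in by (simp add: ftil_def)
  qed
  then have "fpow n l 0 l (c 0) = Some (c l)" by (rule fpow_chain)
  moreover have "c 0 = replicate (2 * n) 0" using assms by (simp add: c_def list_update_same_conv)
  ultimately show ?thesis by (simp add: c_def)
qed

lemma fpow_0_drain:
  assumes "0 < n"
  shows "fpow n l 0 l ((replicate (2 * n) 0)[2 * n - 1 := int l]) = Some (replicate (2 * n) 0)"
proof -
  define c where "c t = (replicate (2 * n) 0)[2 * n - 1 := int l - int t]" for t
  have "ftil n l 0 (c t) = Some (c (Suc t))" if t: "t < l" for t
  proof -
    have c_in: "c t \<in> crysB n l" "c (Suc t) \<in> crysB n l"
      unfolding c_def using assms t by (auto intro!: replicate_update_in_crysB)
    have "fraw n 0 (c t) = c (Suc t)"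
      using assms t by (simp add: fraw_def c_def xc_def xbar_def nth_list_update algebra_simps)
    then show ?thesis using c_in by (simp add: ftil_def)
  qed
  then have "fpow n l 0 l (c 0) = Some (c l)" by (rule fpow_chain)
  moreover have "c l = replicate (2 * n) 0" using assms by (simp add: c_def list_update_same_conv)
  ultimately show ?thesis by (simp add: c_def)
qed

lemma eps_phi_iseq_Suc_peak:
  assumes a: "1 \<le> a" "a \<le> 2 * n"
  shows "eps n l (iseq n j (Suc a)) ((replicate (2 * n) 0)[a - 1 := int l]) = 0 \<and>
    phi n l (iseq n j (Suc a)) ((replicate (2 * n) 0)[a - 1 := int l])
      = (if a = 2 * n then 2 * int l else int l)"
proof -
  have sum: "sB ((replicate (2 * n) 0)[a - 1 := int l]) = int l"
    using a by (simp add: sB_def sum_list_update_group sum_list_replicate)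
  consider "a < n" | "a = n" | "n < a" "a < 2 * n" | "a = 2 * n" using a by linarith
  then show ?thesis
  proof cases
    case 3
    then have "2 * n - a < n" "2 * n - Suc (2 * n - a) = a - 1" by arith+
    then show ?thesis using a 3
      by (simp add: eps_def phi_def iseq_Suc xc_def xbar_def nth_list_update pos_def)
  qed (use a sum in \<open>auto simp: eps_def phi_def iseq_Suc xc_def xbar_def nth_list_update pos_def\<close>)
qed

lemma bseq_eq_peak:
  "1 \<le> a \<Longrightarrow> a \<le> 2 * n \<Longrightarrow> bseq n l j a = Some ((replicate (2 * n) 0)[a - 1 := int l])"
proof (induction a)
  case (Suc a)
  show ?case
  proof (cases "a = 0")
    case True
    have "phi n l 0 (replicate (2 * n) 0) = int l"
      using True Suc.prems by (simp add: phi_def sB_def sum_list_replicate xc_def xbar_def pos_def)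
    then show ?thesis using True Suc.prems fpow_0_fill[of n l] by (simp add: bbar_eq_replicate iseq_def)
  next
    case False
    then show ?thesis
      using Suc eps_phi_iseq_Suc_peak[of a n l j] fpow_iseq_Suc_shift_peak[of a n l j] by simp
  qed
qed simp

lemma bseq_eps_phi_inext:
  assumes "1 \<le> l" "1 \<le> a" "a \<le> 2 * n"
  shows "\<exists>b. bseq n l j a = Some b \<and> eps n l (inext n j a) b = 0 \<and> phi n l (inext n j a) b > 0"
  using assms bseq_eq_peak eps_phi_iseq_Suc_peak[of a n l j] inext_eq_iseq_Suc[of a n j] by simp

lemma bseq_next_level:
  assumes "0 < n"
  shows "bseq n l (j + 1) 0 =
    Option.bind (bseq n l j (2 * n)) (fpow n l (iseq n (j + 1) 1) (lamh l (j + 1) (iseq n (j + 1) 1)))"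
  using assms bseq_eq_peak[of "2 * n" n l j] fpow_0_drain[of n l]
  by (simp add: bbar_eq_replicate iseq_def lamh_def)

lemma eps_nonneg: "b \<in> crysB n l \<Longrightarrow> 0 < i \<Longrightarrow> 0 \<le> eps n l i b"
  by (auto simp: eps_def crysB_def xc_def xbar_def pos_def)

lemma lamh_iseq_le_eps_Bset:
  assumes a: "1 \<le> a" "a \<le> 2 * n" and b: "b \<in> Bset n l j (a - 1)"
  shows "int (lamh l j (iseq n j a)) \<le> eps n l (iseq n j a) b"
proof (cases "a = 1")
  case True
  then have "b = replicate (2 * n) 0" using b by (simp add: bbar_eq_replicate)
  then show ?thesis using True a
    by (simp add: lamh_def iseq_def eps_def sB_def sum_list_replicate xc_def xbar_def pos_def)
next
  case False
  then have "0 < iseq n j a" using a by (simp add: iseq_def)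
  moreover have "b \<in> crysB n l" using b a Bset_eq_crysB_prefix[of "a - 1" n l j]
    by (simp add: crysB_prefix_def)
  ultimately show ?thesis using eps_nonneg by (simp add: lamh_def)
qed

lemma length_mkb: "length (mkb n x xb) = 2 * n"
  by (simp add: mkb_def)

lemma nth_mkb: "p < 2 * n \<Longrightarrow> mkb n x xb ! p = (if p < n then x (p + 1) else xb (2 * n - p))"
  by (simp add: mkb_def nth_append rev_nth Suc_diff_Suc mult_2 del: upt_Suc)

lemma replicate_update_eq_mkb_x:
  "1 \<le> a \<Longrightarrow> a \<le> n \<Longrightarrow>
   (replicate (2 * n) 0)[a - 1 := v] = mkb n (\<lambda>i. if i = a then v else 0) (\<lambda>_. 0)"
  by (intro nth_equalityI) (auto simp: length_mkb nth_mkb nth_list_update)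

lemma replicate_update_eq_mkb_xbar:
  "1 \<le> a \<Longrightarrow> a \<le> n \<Longrightarrow>
   (replicate (2 * n) 0)[n + a - 1 := v] = mkb n (\<lambda>_. 0) (\<lambda>i. if i = n - a + 1 then v else 0)"
  by (intro nth_equalityI) (auto simp: length_mkb nth_mkb nth_list_update)

lemma crysB_prefix_eq_x:
  assumes "a \<le> n"
  shows "crysB_prefix n l a = {b \<in> crysB n l. (\<forall>i. a < i \<and> i \<le> n \<longrightarrow> xc b i = 0)
                                          \<and> (\<forall>i. 1 \<le> i \<and> i \<le> n \<longrightarrow> xbar n b i = 0)}"
proof -
  have "(\<forall>p < 2 * n. a \<le> p \<longrightarrow> b ! p = 0) \<longleftrightarrow>
        (\<forall>i. a < i \<and> i \<le> n \<longrightarrow> b ! (i - 1) = 0) \<and>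
        (\<forall>i. 1 \<le> i \<and> i \<le> n \<longrightarrow> b ! (2 * n - i) = 0)"
    for b :: "int list"
  proof (intro iffI allI impI)
    fix p
    assume "(\<forall>i. a < i \<and> i \<le> n \<longrightarrow> b ! (i - 1) = 0) \<and>
      (\<forall>i. 1 \<le> i \<and> i \<le> n \<longrightarrow> b ! (2 * n - i) = 0)" "p < 2 * n" "a \<le> p"
    then show "b ! p = 0" by (cases "p < n") (auto dest: spec[of _ "p + 1"] spec[of _ "2 * n - p"])
  qed (use assms in auto)
  then show ?thesis by (auto simp: crysB_prefix_def xc_def xbar_def)
qed

lemma crysB_prefix_eq_xbar:
  "crysB_prefix n l (n + a) = {b \<in> crysB n l. \<forall>i. 1 \<le> i \<and> i \<le> n - a \<longrightarrow> xbar n b i = 0}"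
proof -
  have "(\<forall>p < 2 * n. n + a \<le> p \<longrightarrow> b ! p = 0) \<longleftrightarrow>
        (\<forall>i. 1 \<le> i \<and> i \<le> n - a \<longrightarrow> b ! (2 * n - i) = 0)"
    for b :: "int list"
  proof (intro iffI allI impI)
    fix p assume "\<forall>i. 1 \<le> i \<and> i \<le> n - a \<longrightarrow> b ! (2 * n - i) = 0" "p < 2 * n" "n + a \<le> p"
    then show "b ! p = 0" by (auto dest: spec[of _ "2 * n - p"])
  qed auto
  then show ?thesis by (auto simp: crysB_prefix_def xbar_def)
qed

theorem mainTheorem6:
  fixes n l :: nat
  assumes "n \<ge> 2" and "l \<ge> 1"
  shows
    "(\<forall>j \<ge> 1. Bset n l j (2 * n) = crysB n l)
   \<and> (\<forall>j \<ge> 1. \<forall>a. 1 \<le> a \<and> a \<le> 2 * n \<longrightarrow>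
        (\<forall>b \<in> Bset n l j (a - 1). int (lamh l j (iseq n j a)) \<le> eps n l (iseq n j a) b))
   \<and> (\<forall>j \<ge> 1. (\<forall>a. 1 \<le> a \<and> a \<le> 2 * n \<longrightarrow>
          (\<exists>b. bseq n l j a = Some b \<and> eps n l (inext n j a) b = 0 \<and> phi n l (inext n j a) b > 0))
        \<and> bseq n l (j + 1) 0 =
            Option.bind (bseq n l j (2 * n))
              (fpow n l (iseq n (j + 1) 1) (lamh l (j + 1) (iseq n (j + 1) 1))))
   \<and> (\<forall>j \<ge> 1.
        Bset n l j 0 = {mkb n (\<lambda>_. 0) (\<lambda>_. 0)}
      \<and> Bset n l j (2 * n) = crysB n l
      \<and> (\<forall>a. 1 \<le> a \<and> a \<le> n \<longrightarrow>
           Bset n l j a = {b \<in> crysB n l. (\<forall>i. a < i \<and> i \<le> n \<longrightarrow> xc b i = 0)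
                                       \<and> (\<forall>i. 1 \<le> i \<and> i \<le> n \<longrightarrow> xbar n b i = 0)})
      \<and> (\<forall>a. 1 \<le> a \<and> a \<le> n - 1 \<longrightarrow>
           Bset n l j (n + a) = {b \<in> crysB n l. \<forall>i. 1 \<le> i \<and> i \<le> n - a \<longrightarrow> xbar n b i = 0})
      \<and> bseq n l j 0 = Some (mkb n (\<lambda>_. 0) (\<lambda>_. 0))
      \<and> (\<forall>a. 1 \<le> a \<and> a \<le> n \<longrightarrow>
           bseq n l j a = Some (mkb n (\<lambda>i. if i = a then int l else 0) (\<lambda>_. 0))
         \<and> bseq n l j (n + a) = Some (mkb n (\<lambda>_. 0) (\<lambda>i. if i = n - a + 1 then int l else 0))))"
proof -
  have n: "0 < n" using assms(1) by simp
  have B: "Bset n l j a = crysB_prefix n l a" if "a \<le> 2 * n" for j a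
    using that by (rule Bset_eq_crysB_prefix)
  have B_top: "Bset n l j (2 * n) = crysB n l" for j
    using B[of "2 * n"] by (auto simp: crysB_prefix_def)
  have b_x: "bseq n l j a = Some (mkb n (\<lambda>i. if i = a then int l else 0) (\<lambda>_. 0))"
    if "1 \<le> a" "a \<le> n" for j a
    using that bseq_eq_peak[of a n l j] replicate_update_eq_mkb_x[of a n] by simp
  have b_xbar: "bseq n l j (n + a) = Some (mkb n (\<lambda>_. 0) (\<lambda>i. if i = n - a + 1 then int l else 0))"
    if "1 \<le> a" "a \<le> n" for j a
    using that bseq_eq_peak[of "n + a" n l j] replicate_update_eq_mkb_xbar[of a n] by simp
  show ?thesis
    using B B_top b_x b_xbar lamh_iseq_le_eps_Bset bseq_eps_phi_inext[OF assms(2)]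
      bseq_next_level[OF n] crysB_prefix_eq_x crysB_prefix_eq_xbar
    by (auto simp: bbar_def)
qed

end
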